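(* Let $X \subset \mathbb{R}^{2n}$ be a symplectically self-polar convex body with $C^1$-smooth boundary and let $Y=\{x+f(x): x\in\partial X\}$. For every $x\in\partial X$, the line $\{x+tf(x): t\in\mathbb{R}\}$ intersects $Y$ in exactly the two points $x+f(x)$ and $x-f(x)$. If moreover $\partial X$ is $C^2$-smooth, then each such line is transversal to $Y$ at both intersection points.
   Context: $\mathbb{R}^{2n}\cong\mathbb{C}^n$, $J$ is multiplication by $\sqrt{-1}$, $\omega(u,v)=\langle Ju,v\rangle$. For a convex body $X$ with origin in its interior, $X^\omega=\{y: \omega(x,y)\le 1\ \forall x\in X\}$; $X$ is symplectically self-polar if $X=X^\omega$. For $C^1$ boundary, $f\colon\partial X\to\partial X^\omega$ assigns to $x$ the unique $f(x)\in X^\omega$ with $\omega(x,f(x))=1$; when $X=X^\omega$, $f$ maps $\partial X$ to itself, and for $C^2$ boundary $f$ is $C^1$ and $Y$ is a $C^1$ embedded hypersurface. *)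

theory Defs
  imports "HOL-Analysis.Analysis"
begin

text \<open>R^{2n} is identified with C^n, modelled as complex ^ 'n (a real inner product space).\<close>

definition cJ :: "complex ^ 'n \<Rightarrow> complex ^ 'n" where
  "cJ u = (\<chi> i. \<i> * u $ i)"

definition omega :: "complex ^ 'n \<Rightarrow> complex ^ 'n \<Rightarrow> real" where
  "omega u v = inner (cJ u) v"

definition convex_body :: "'a::euclidean_space set \<Rightarrow> bool" where
  "convex_body X \<longleftrightarrow> compact X \<and> convex X \<and> interior X \<noteq> {}"

definition sympolar :: "(complex ^ 'n) set \<Rightarrow> (complex ^ 'n) set" where
  "sympolar X = {y. \<forall>x\<in>X. omega x y \<le> 1}"

definition sym_f :: "(complex ^ 'n) set \<Rightarrow> complex ^ 'n \<Rightarrow> complex ^ 'n" where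
  "sym_f X x = (THE y. y \<in> sympolar X \<and> omega x y = 1)"

text \<open>C^1 and C^2 maps on open sets (finite dimensional, so pointwise continuity
of the derivative applied to each fixed vector is continuity of the derivative).\<close>

definition C1_on :: "'a::euclidean_space set \<Rightarrow> ('a \<Rightarrow> 'b::euclidean_space) \<Rightarrow> bool" where
  "C1_on U F \<longleftrightarrow> (\<exists>F'. (\<forall>x\<in>U. (F has_derivative F' x) (at x)) \<and>
                        (\<forall>v. continuous_on U (\<lambda>x. F' x v)))"

definition C2_on :: "'a::euclidean_space set \<Rightarrow> ('a \<Rightarrow> 'b::euclidean_space) \<Rightarrow> bool" where
  "C2_on U F \<longleftrightarrow> (\<exists>F'. (\<forall>x\<in>U. (F has_derivative F' x) (at x)) \<and>
                        (\<forall>v. C1_on U (\<lambda>x. F' x v)))"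

definition boundary_with :: "(('a::euclidean_space) set \<Rightarrow> ('a \<Rightarrow> real) \<Rightarrow> bool) \<Rightarrow> 'a set \<Rightarrow> bool" where
  "boundary_with Ck X \<longleftrightarrow> (\<forall>p\<in>frontier X. \<exists>U g. open U \<and> p \<in> U \<and> Ck U g \<and>
      (\<forall>x\<in>U. \<forall>D. (g has_derivative D) (at x) \<longrightarrow> D \<noteq> (\<lambda>h. 0)) \<and>
      X \<inter> U = {x\<in>U. g x \<le> 0})"

abbreviation C1_boundary :: "'a::euclidean_space set \<Rightarrow> bool" where
  "C1_boundary X \<equiv> boundary_with C1_on X"

abbreviation C2_boundary :: "'a::euclidean_space set \<Rightarrow> bool" where
  "C2_boundary X \<equiv> boundary_with C2_on X"

definition tangent_space :: "'a::real_normed_vector set \<Rightarrow> 'a \<Rightarrow> 'a set" where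
  "tangent_space Y y = {v. \<exists>\<gamma> e. e > 0 \<and> \<gamma> 0 = y \<and> (\<forall>t\<in>{-e<..<e}. \<gamma> t \<in> Y) \<and>
        (\<gamma> has_vector_derivative v) (at 0)}"

definition transversal_line_at :: "'a::real_normed_vector set \<Rightarrow> 'a \<Rightarrow> 'a \<Rightarrow> bool" where
  "transversal_line_at Y y d \<longleftrightarrow> y \<in> Y \<and> d \<notin> tangent_space Y y"

end

theory Submission
  imports Defs
begin

text \<open>The polar point \<open>f x\<close> is the unique \<open>y \<in> X\<close> with \<open>omega x y = 1\<close>: every such \<open>y\<close> yields
  the supporting normal \<open>- J y\<close> of \<open>X\<close> at \<open>x\<close>, and at a \<open>C\<^sup>1\<close> boundary point all supporting normals
  are parallel. Self-polarity and the symmetry \<open>X = - X\<close> give \<open>f (- f x) = x\<close>, so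
  \<open>x - f x = (- f x) + f (- f x)\<close> lies on \<open>Y\<close> as well. Conversely, if \<open>x + t f x = x' + f x'\<close>, pairing
  this identity by \<open>omega\<close> with \<open>x'\<close>, \<open>f x'\<close> and \<open>f x\<close> and using \<open>omega \<le> 1\<close> on \<open>X\<close> identifies \<open>x'\<close>
  as \<open>x\<close> or \<open>- f x\<close>, which forces \<open>t = \<plusminus>1\<close>.

  For transversality, a \<open>C\<^sup>2\<close> boundary carries an inner ball touching it at \<open>- f x\<close>. Passing to
  polars, \<open>X\<close> is then quadratically pinched at \<open>x\<close>:
  \<open>\<parallel>z - x\<parallel>\<^sup>2 \<le> C (1 - omega (- f x) z)\<close> for \<open>z \<in> X\<close>. If a point of \<open>Y\<close> sits at distance \<open>s\<close> along the
  line from \<open>x \<plusminus> f x\<close> up to an error \<open>E\<close>, the same pairing argument turns this into \<open>s \<le> M \<parallel>E\<parallel>\<close>,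
  so \<open>Y\<close> leaves the line at a linear rate and the line direction is not tangent to \<open>Y\<close>.\<close>

section \<open>The symplectic form\<close>

lemma cJ_nth [simp]: "cJ u $ i = \<i> * u $ i"
  by (simp add: cJ_def)

lemma cJ_cJ [simp]: "cJ (cJ u) = - u"
  by (simp add: vec_eq_iff)

lemma inner_cJ_left: "cJ u \<bullet> w = - (u \<bullet> cJ w)"
  by (simp add: inner_vec_def inner_complex_def sum_negf[symmetric] algebra_simps)

lemma inner_cJ_cJ [simp]: "cJ u \<bullet> cJ w = u \<bullet> w"
  by (simp add: inner_vec_def inner_complex_def algebra_simps)

lemma norm_cJ [simp]: "norm (cJ u) = norm u"
  by (simp add: norm_eq_sqrt_inner)

lemma omega_eq_inner: "omega u v = u \<bullet> (- cJ v)"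
  by (simp add: omega_def inner_cJ_left)

lemma omega_antisym: "omega u v = - omega v u"
  unfolding omega_def using inner_cJ_left[of u v] inner_commute[of "cJ v" u] by simp

lemma omega_self [simp]: "omega u u = 0"
  using omega_antisym[of u u] by simp

lemma omega_zero_right [simp]: "omega u 0 = 0"
  by (simp add: omega_def)

lemma omega_add_left [simp]: "omega (u + u') v = omega u v + omega u' v"
  and omega_diff_left [simp]: "omega (u - u') v = omega u v - omega u' v"
  and omega_minus_left [simp]: "omega (- u) v = - omega u v"
  and omega_scaleR_left [simp]: "omega (c *\<^sub>R u) v = c * omega u v"
  by (simp_all add: omega_eq_inner inner_add_left inner_diff_left)

lemma omega_add_right [simp]: "omega u (v + v') = omega u v + omega u v'"
  and omega_diff_right [simp]: "omega u (v - v') = omega u v - omega u v'"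
  and omega_minus_right [simp]: "omega u (- v) = - omega u v"
  and omega_scaleR_right [simp]: "omega u (c *\<^sub>R v) = c * omega u v"
  by (simp_all add: omega_def inner_add_right inner_diff_right)

lemma abs_omega_le: "\<bar>omega u v\<bar> \<le> norm u * norm v"
  unfolding omega_def using Cauchy_Schwarz_ineq2[of "cJ u" v] by simp

lemma omega_le: "omega u v \<le> norm u * norm v"
  using abs_omega_le[of u v] by simp

lemma omega_cJ_left [simp]: "omega (cJ u) u = - (norm u)\<^sup>2"
  by (simp add: omega_eq_inner power2_norm_eq_inner)

section \<open>Supporting normals and inner balls at smooth boundary points\<close>

lemma parallel_if_halfspace_nonpos:
  fixes a b :: "'a::real_inner"
  assumes "a \<noteq> 0" and nonpos: "\<And>v. a \<bullet> v < 0 \<Longrightarrow> b \<bullet> v \<le> 0"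
  shows "\<exists>k. b = k *\<^sub>R a"
proof -
  define P where "P = b - (b \<bullet> a / (a \<bullet> a)) *\<^sub>R a"
  have aP: "a \<bullet> P = 0"
    using assms(1) by (simp add: P_def inner_diff_right inner_commute)
  have bP: "b \<bullet> P = P \<bullet> P"
    using aP by (simp add: P_def inner_diff_left inner_commute)
  have "P \<bullet> P \<le> \<epsilon> * (b \<bullet> a)" if "0 < \<epsilon>" for \<epsilon>
  proof -
    have "a \<bullet> (P - \<epsilon> *\<^sub>R a) < 0"
      using aP that assms(1) by (simp add: inner_diff_right)
    then have "b \<bullet> (P - \<epsilon> *\<^sub>R a) \<le> 0"
      by (rule nonpos)
    then show ?thesis
      using bP by (simp add: inner_diff_right inner_commute)
  qed
  then have "P \<bullet> P \<le> 0"
    by (intro tendsto_lowerbound[of "\<lambda>\<epsilon>. \<epsilon> * (b \<bullet> a)" 0 "at_right 0"])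
       (auto intro!: tendsto_eq_intros eventually_at_rightI[of 0 1])
  then have "P = 0"
    by (metis inner_eq_zero_iff inner_ge_zero order_antisym)
  then show ?thesis
    unfolding P_def by (metis eq_iff_diff_eq_0)
qed

lemma linear_functional_eq_inner:
  fixes D :: "'a::euclidean_space \<Rightarrow> real"
  assumes "linear D"
  shows "D h = (\<Sum>b\<in>Basis. D b *\<^sub>R b) \<bullet> h"
proof -
  have "D h = D (\<Sum>b\<in>Basis. (h \<bullet> b) *\<^sub>R b)"
    by (simp add: euclidean_representation)
  also have "\<dots> = (\<Sum>b\<in>Basis. (h \<bullet> b) * D b)"
    by (simp add: linear_sum[OF assms] linear_scale[OF assms] o_def)
  also have "\<dots> = (\<Sum>b\<in>Basis. D b *\<^sub>R b) \<bullet> h"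
    unfolding inner_sum_left by (intro sum.cong refl) (simp add: inner_commute)
  finally show ?thesis .
qed

lemma has_real_derivative_along_line:
  fixes g :: "'a::real_normed_vector \<Rightarrow> real"
  assumes "(g has_derivative D) (at (x + t *\<^sub>R v))"
  shows "((\<lambda>s. g (x + s *\<^sub>R v)) has_real_derivative D v) (at t)"
proof -
  interpret D: bounded_linear D
    using assms by (rule has_derivative_bounded_linear)
  have "((\<lambda>s. x + s *\<^sub>R v) has_derivative (\<lambda>s. s *\<^sub>R v)) (at t)"
    by (auto intro!: derivative_eq_intros)
  from has_derivative_compose[OF this assms] show ?thesis
    by (rule has_derivative_imp_has_field_derivative) (simp add: D.scale)
qed

lemma sublevel_descent:
  fixes g :: "'a::real_normed_vector \<Rightarrow> real"
  assumes "open U" "x \<in> U" "(g has_derivative D) (at x)" "g x \<le> 0" "D v < 0"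
  shows "\<exists>t>0. x + t *\<^sub>R v \<in> U \<and> g (x + t *\<^sub>R v) \<le> 0"
proof -
  have "((\<lambda>s. g (x + s *\<^sub>R v)) has_real_derivative D v) (at 0)"
    using has_real_derivative_along_line[of g D x 0 v] assms(3) by simp
  then obtain d where "0 < d" and dec: "\<And>h. 0 < h \<Longrightarrow> h < d \<Longrightarrow> g (x + h *\<^sub>R v) < g x"
    using DERIV_neg_dec_right[OF _ assms(5)] by force
  obtain e where "0 < e" and e: "ball x e \<subseteq> U"
    using assms(1,2) open_contains_ball by blast
  define t where "t = min d (e / (norm v + 1)) / 2"
  have "0 < norm v + 1"
    using norm_ge_zero[of v] by linarith
  then have "0 < t" "t < d"
    using \<open>0 < d\<close> \<open>0 < e\<close> by (auto simp: t_def)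
  have "t \<le> e / (norm v + 1) / 2"
    unfolding t_def by (intro divide_right_mono min.cobounded2) simp
  then have "t * (norm v + 1) < e"
    using \<open>0 < e\<close> \<open>0 < norm v + 1\<close> by (simp add: field_simps)
  then have "x + t *\<^sub>R v \<in> ball x e"
    using \<open>0 < t\<close> by (simp add: dist_norm algebra_simps)
  then show ?thesis
    using e dec[OF \<open>0 < t\<close> \<open>t < d\<close>] \<open>0 < t\<close> assms(4) by force
qed

lemma boundary_withE:
  assumes "boundary_with Ck X" and "p \<in> frontier X"
  obtains U g where "open U" "p \<in> U" "Ck U g"
    "\<And>z D. z \<in> U \<Longrightarrow> (g has_derivative D) (at z) \<Longrightarrow> D \<noteq> (\<lambda>h. 0)"
    "X \<inter> U = {z\<in>U. g z \<le> 0}"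
  using assms unfolding boundary_with_def by metis

lemma C1_boundary_normals_parallel:
  fixes X :: "'a::euclidean_space set"
  assumes "C1_boundary X" and x: "x \<in> frontier X" "x \<in> X"
  obtains a where "a \<noteq> 0" "\<And>n. \<forall>z\<in>X. n \<bullet> (z - x) \<le> 0 \<Longrightarrow> \<exists>k. n = k *\<^sub>R a"
proof -
  obtain U and g :: "'a \<Rightarrow> real" where U: "open U" "x \<in> U" and "C1_on U g"
    and nz: "\<And>z D. z \<in> U \<Longrightarrow> (g has_derivative D) (at z) \<Longrightarrow> D \<noteq> (\<lambda>h. 0)"
    and XU: "X \<inter> U = {z\<in>U. g z \<le> 0}"
    using boundary_withE[OF assms(1) x(1)] by blast
  obtain D where gD: "(g has_derivative D) (at x)"
    using \<open>C1_on U g\<close> U(2) unfolding C1_on_def by blast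
  define a where "a = (\<Sum>b\<in>Basis. D b *\<^sub>R b)"
  have Da: "D v = a \<bullet> v" for v
    unfolding a_def using gD by (intro linear_functional_eq_inner has_derivative_linear)
  have "a \<noteq> 0"
  proof
    assume "a = 0"
    then have "D = (\<lambda>h. 0)"
      using Da by (simp add: fun_eq_iff)
    then show False
      using nz[OF U(2) gD] by blast
  qed
  moreover have "\<exists>k. n = k *\<^sub>R a" if n: "\<forall>z\<in>X. n \<bullet> (z - x) \<le> 0" for n
  proof (rule parallel_if_halfspace_nonpos[OF \<open>a \<noteq> 0\<close>])
    fix v assume "a \<bullet> v < 0"
    have "g x \<le> 0"
      using XU x(2) U(2) by blast
    moreover have "D v < 0"
      using Da \<open>a \<bullet> v < 0\<close> by simp
    ultimately obtain t where "0 < t" "x + t *\<^sub>R v \<in> U" "g (x + t *\<^sub>R v) \<le> 0"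
      using sublevel_descent[OF U gD] by blast
    then have "x + t *\<^sub>R v \<in> X"
      using XU by blast
    then have "t * (n \<bullet> v) \<le> 0"
      using n by force
    then show "n \<bullet> v \<le> 0"
      using \<open>0 < t\<close> by (simp add: mult_le_0_iff)
  qed
  ultimately show ?thesis
    using that by blast
qed

lemma differentiable_imp_lipschitz_at:
  assumes "f differentiable (at x)"
  obtains L d where "0 < L" "0 < d" "\<And>y. norm (y - x) < d \<Longrightarrow> norm (f y - f x) \<le> L * norm (y - x)"
proof -
  obtain f' where f': "(f has_derivative f') (at x)"
    using assms unfolding differentiable_def by blast
  obtain B where "0 < B" and B: "\<And>h. norm (f' h) \<le> norm h * B"
    using bounded_linear.pos_bounded[OF has_derivative_bounded_linear[OF f']] by blast
  obtain d where "0 < d" and d: "\<And>y. norm (y - x) < d \<Longrightarrow> norm (f y - f x - f' (y - x)) \<le> 1 * norm (y - x)"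
    using f' zero_less_one unfolding has_derivative_at_alt by blast
  have "norm (f y - f x) \<le> (B + 1) * norm (y - x)" if "norm (y - x) < d" for y
    using norm_triangle_sub[of "f y - f x" "f' (y - x)"] d[OF that] B[of "y - x"]
    by (simp add: algebra_simps)
  then show ?thesis
    using that[of "B + 1" d] \<open>0 < B\<close> \<open>0 < d\<close> by simp
qed

lemma quadratic_upper_bound:
  fixes g :: "'a::real_inner \<Rightarrow> real"
  assumes deriv: "\<And>z. z \<in> ball x0 \<rho> \<Longrightarrow> (g has_derivative (\<lambda>h. G z \<bullet> h)) (at z)"
    and lip: "\<And>z. z \<in> ball x0 \<rho> \<Longrightarrow> norm (G z - G x0) \<le> L * norm (z - x0)"
    and "0 \<le> L" and z: "z \<in> ball x0 \<rho>"
  shows "g z \<le> g x0 + G x0 \<bullet> (z - x0) + L * (norm (z - x0))\<^sup>2"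
proof -
  define h where "h = z - x0"
  have segment: "x0 + t *\<^sub>R h \<in> ball x0 \<rho>" "norm (t *\<^sub>R h) \<le> norm h" if "0 \<le> t" "t \<le> 1" for t
    using that z mult_left_le_one_le[of "norm h" t]
    by (auto simp: h_def dist_norm norm_minus_commute)
  have "((\<lambda>t. g (x0 + t *\<^sub>R h)) has_real_derivative G (x0 + t *\<^sub>R h) \<bullet> h) (at t)"
    if "0 \<le> t" "t \<le> 1" for t
    using has_real_derivative_along_line deriv[OF segment(1)[OF that]] by blast
  from MVT2[OF zero_less_one this] obtain \<xi> where \<xi>: "0 < \<xi>" "\<xi> < 1"
    and mvt: "g (x0 + 1 *\<^sub>R h) - g (x0 + 0 *\<^sub>R h) = (1 - 0) * (G (x0 + \<xi> *\<^sub>R h) \<bullet> h)"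
    by blast
  have "G (x0 + \<xi> *\<^sub>R h) \<bullet> h = G x0 \<bullet> h + (G (x0 + \<xi> *\<^sub>R h) - G x0) \<bullet> h"
    by (simp add: inner_diff_left)
  also have "\<dots> \<le> G x0 \<bullet> h + norm (G (x0 + \<xi> *\<^sub>R h) - G x0) * norm h"
    using norm_cauchy_schwarz by simp
  also have "\<dots> \<le> G x0 \<bullet> h + L * norm h * norm h"
  proof -
    have "norm (G (x0 + \<xi> *\<^sub>R h) - G x0) \<le> L * norm (\<xi> *\<^sub>R h)"
      using lip[OF segment(1)] \<xi> by simp
    also have "\<dots> \<le> L * norm h"
      using segment(2) \<xi> \<open>0 \<le> L\<close> by (simp add: mult_left_mono)
    finally show ?thesis
      by (simp add: mult_right_mono)
  qed
  finally show ?thesis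
    using mvt by (simp add: h_def power2_eq_square)
qed

lemma norm_add_le_imp_sq_inner_nonpos:
  fixes h w :: "'a::real_inner"
  assumes "norm (h + w) \<le> norm w"
  shows "(norm h)\<^sup>2 + 2 * (h \<bullet> w) \<le> 0"
proof -
  have "2 * (h \<bullet> w) = (norm (h + w))\<^sup>2 - (norm h)\<^sup>2 - (norm w)\<^sup>2"
    by (simp add: dot_norm)
  moreover have "(norm (h + w))\<^sup>2 \<le> (norm w)\<^sup>2"
    using assms by (simp add: power_mono)
  ultimately show ?thesis
    by linarith
qed

lemma cball_touching_if_quadratic_sublevel:
  fixes a x0 :: "'a::real_inner"
  assumes "a \<noteq> 0" "0 < \<rho>" "0 < L"
    and sub: "\<And>z. z \<in> ball x0 \<rho> \<Longrightarrow> a \<bullet> (z - x0) + L * (norm (z - x0))\<^sup>2 \<le> 0 \<Longrightarrow> z \<in> X"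
  shows "\<exists>c r. 0 < r \<and> cball c r \<subseteq> X \<and> dist x0 c = r"
proof -
  define r where "r = min (\<rho> / 3) (norm a / (2 * L))"
  define k where "k = r / norm a"
  define c where "c = x0 - k *\<^sub>R a"
  have "0 < r" "0 < k"
    using assms by (auto simp: r_def k_def)
  have "2 * k * L \<le> 1"
    using assms by (simp add: k_def r_def min_def field_simps)
  have "norm (k *\<^sub>R a) = r"
    using assms \<open>0 < r\<close> by (simp add: k_def)
  have "cball c r \<subseteq> X"
  proof
    fix z assume "z \<in> cball c r"
    define h where "h = z - x0"
    have zc: "z - c = h + k *\<^sub>R a"
      by (simp add: h_def c_def)
    have "norm (z - c) \<le> r"
      using \<open>z \<in> cball c r\<close> by (simp add: dist_norm norm_minus_commute)
    then have "norm (h + k *\<^sub>R a) \<le> r"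
      by (simp add: zc)
    moreover have "r \<le> \<rho> / 3"
      by (simp add: r_def)
    ultimately have "norm h < \<rho>"
      using norm_triangle_ineq4[of "h + k *\<^sub>R a" "k *\<^sub>R a"] \<open>norm (k *\<^sub>R a) = r\<close> \<open>0 < \<rho>\<close> by simp
    have "(norm h)\<^sup>2 + 2 * k * (a \<bullet> h) \<le> 0"
      using norm_add_le_imp_sq_inner_nonpos[of h "k *\<^sub>R a"] \<open>norm (h + k *\<^sub>R a) \<le> r\<close>
        \<open>norm (k *\<^sub>R a) = r\<close> by (simp add: inner_commute)
    moreover have "2 * k * L * (norm h)\<^sup>2 \<le> (norm h)\<^sup>2"
      using \<open>2 * k * L \<le> 1\<close> \<open>0 < k\<close> \<open>0 < L\<close> by (intro mult_left_le_one_le) auto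
    moreover have "2 * k * (a \<bullet> h + L * (norm h)\<^sup>2) = 2 * k * (a \<bullet> h) + 2 * k * L * (norm h)\<^sup>2"
      by (simp add: algebra_simps)
    ultimately have "2 * k * (a \<bullet> h + L * (norm h)\<^sup>2) \<le> 0"
      by linarith
    then have "a \<bullet> (z - x0) + L * (norm (z - x0))\<^sup>2 \<le> 0"
      using \<open>0 < k\<close> by (simp add: h_def mult_le_0_iff)
    moreover have "z \<in> ball x0 \<rho>"
      using \<open>norm h < \<rho>\<close> by (simp add: h_def dist_norm norm_minus_commute)
    ultimately show "z \<in> X"
      by (rule sub[rotated])
  qed
  moreover have "dist x0 c = r"
    using \<open>norm (k *\<^sub>R a) = r\<close> by (simp add: c_def dist_norm)
  ultimately show ?thesis
    using \<open>0 < r\<close> by auto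
qed

lemma C2_on_gradient:
  fixes g :: "'a::euclidean_space \<Rightarrow> real"
  assumes "C2_on U g"
  obtains G where "\<And>z. z \<in> U \<Longrightarrow> (g has_derivative (\<lambda>h. G z \<bullet> h)) (at z)"
    "\<And>z. z \<in> U \<Longrightarrow> G differentiable (at z)"
proof -
  obtain F' where F': "\<And>z. z \<in> U \<Longrightarrow> (g has_derivative F' z) (at z)"
    and F'_C1: "\<And>v. C1_on U (\<lambda>z. F' z v)"
    using assms unfolding C2_on_def by blast
  define G where "G = (\<lambda>z. \<Sum>b\<in>Basis. F' z b *\<^sub>R b)"
  have "(g has_derivative (\<lambda>h. G z \<bullet> h)) (at z)" if "z \<in> U" for z
  proof -
    have "F' z h = G z \<bullet> h" for h
      unfolding G_def by (rule linear_functional_eq_inner[OF has_derivative_linear[OF F'[OF that]]])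
    then have "F' z = (\<lambda>h. G z \<bullet> h)"
      by (simp add: fun_eq_iff)
    then show ?thesis
      using F'[OF that] by simp
  qed
  moreover have "G differentiable (at z)" if "z \<in> U" for z
  proof -
    have "(\<lambda>z. F' z b) differentiable (at z)" for b
      using F'_C1[of b] that unfolding C1_on_def differentiable_def by blast
    then show ?thesis
      unfolding G_def by (intro differentiable_sum differentiable_scaleR) auto
  qed
  ultimately show ?thesis
    using that by blast
qed

lemma C2_boundary_interior_ball:
  fixes X :: "'a::euclidean_space set"
  assumes "C2_boundary X" and x0: "x0 \<in> frontier X" "x0 \<in> X"
  shows "\<exists>c r. 0 < r \<and> cball c r \<subseteq> X \<and> dist x0 c = r"
proof -
  obtain U and g :: "'a \<Rightarrow> real" where U: "open U" "x0 \<in> U" and "C2_on U g"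
    and nz: "\<And>z D. z \<in> U \<Longrightarrow> (g has_derivative D) (at z) \<Longrightarrow> D \<noteq> (\<lambda>h. 0)"
    and XU: "X \<inter> U = {z\<in>U. g z \<le> 0}"
    using boundary_withE[OF assms(1) x0(1)] by blast
  obtain G where gradient: "\<And>z. z \<in> U \<Longrightarrow> (g has_derivative (\<lambda>h. G z \<bullet> h)) (at z)"
    and "G differentiable (at x0)"
    using C2_on_gradient[OF \<open>C2_on U g\<close>] U(2) by blast
  obtain L d where "0 < L" "0 < d"
    and lip: "\<And>z. norm (z - x0) < d \<Longrightarrow> norm (G z - G x0) \<le> L * norm (z - x0)"
    using differentiable_imp_lipschitz_at[OF \<open>G differentiable (at x0)\<close>] by blast
  obtain e where "0 < e" "ball x0 e \<subseteq> U"
    using U open_contains_ball by blast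
  define \<rho> where "\<rho> = min e d"
  have "0 < \<rho>" "ball x0 \<rho> \<subseteq> U"
    using \<open>0 < e\<close> \<open>0 < d\<close> \<open>ball x0 e \<subseteq> U\<close> by (auto simp: \<rho>_def)
  have "G x0 \<noteq> 0"
    using nz[OF U(2) gradient[OF U(2)]] by (auto simp: fun_eq_iff)
  have "g x0 \<le> 0"
    using XU x0(2) U(2) by blast
  show ?thesis
  proof (rule cball_touching_if_quadratic_sublevel[OF \<open>G x0 \<noteq> 0\<close> \<open>0 < \<rho>\<close> \<open>0 < L\<close>])
    fix z assume z: "z \<in> ball x0 \<rho>" "G x0 \<bullet> (z - x0) + L * (norm (z - x0))\<^sup>2 \<le> 0"
    have "g z \<le> g x0 + G x0 \<bullet> (z - x0) + L * (norm (z - x0))\<^sup>2"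
    proof (rule quadratic_upper_bound[OF _ _ _ z(1)])
      show "(g has_derivative (\<lambda>h. G w \<bullet> h)) (at w)" if "w \<in> ball x0 \<rho>" for w
        using gradient that \<open>ball x0 \<rho> \<subseteq> U\<close> by blast
      show "norm (G w - G x0) \<le> L * norm (w - x0)" if "w \<in> ball x0 \<rho>" for w
        using lip that by (simp add: \<rho>_def dist_norm norm_minus_commute)
    qed (use \<open>0 < L\<close> in simp)
    then have "g z \<le> 0"
      using \<open>g x0 \<le> 0\<close> z(2) by linarith
    moreover have "z \<in> U"
      using z(1) \<open>ball x0 \<rho> \<subseteq> U\<close> by blast
    ultimately show "z \<in> X"
      using XU by blast
  qed
qed

lemma tangent_space_uminus:
  assumes "d \<in> tangent_space Y p"
  shows "- d \<in> tangent_space Y p"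
proof -
  obtain \<gamma> e where "0 < e" "\<gamma> 0 = p" and in_Y: "\<forall>t\<in>{-e<..<e}. \<gamma> t \<in> Y"
    and "(\<gamma> has_vector_derivative d) (at 0)"
    using assms unfolding tangent_space_def by blast
  have "((\<lambda>t::real. - t) has_vector_derivative - 1) (at 0)"
    by (intro derivative_intros)
  then have "((\<gamma> \<circ> uminus) has_vector_derivative (- 1) *\<^sub>R d) (at 0)"
    using \<open>(\<gamma> has_vector_derivative d) (at 0)\<close> by (intro vector_diff_chain_at) simp_all
  moreover have "\<forall>t\<in>{-e<..<e}. (\<gamma> \<circ> uminus) t \<in> Y"
    using in_Y by auto
  ultimately show ?thesis
    unfolding tangent_space_def using \<open>0 < e\<close> \<open>\<gamma> 0 = p\<close>
    by (intro CollectI exI[of _ "\<gamma> \<circ> uminus"] exI[of _ e]) simp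
qed

lemma not_in_tangent_space_if_escapes:
  fixes Y :: "'a::real_normed_vector set"
  assumes escape: "\<And>s E. 0 < s \<Longrightarrow> p + s *\<^sub>R d + E \<in> Y \<Longrightarrow> s \<le> M * norm E"
  shows "d \<notin> tangent_space Y p"
proof
  assume "d \<in> tangent_space Y p"
  then obtain \<gamma> e where "0 < e" "\<gamma> 0 = p" and in_Y: "\<forall>t\<in>{-e<..<e}. \<gamma> t \<in> Y"
    and "(\<gamma> has_vector_derivative d) (at 0)"
    unfolding tangent_space_def by blast
  define \<epsilon> where "\<epsilon> = 1 / (2 * (\<bar>M\<bar> + 1))"
  have "0 < \<epsilon>"
    by (simp add: \<epsilon>_def add_nonneg_pos)
  obtain \<delta> where "0 < \<delta>"
    and approx: "\<And>t. norm (t - 0) < \<delta> \<Longrightarrow> norm (\<gamma> t - \<gamma> 0 - (t - 0) *\<^sub>R d) \<le> \<epsilon> * norm (t - 0)"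
    using \<open>(\<gamma> has_vector_derivative d) (at 0)\<close> \<open>0 < \<epsilon>\<close>
    unfolding has_vector_derivative_def has_derivative_at_alt by blast
  define s where "s = min \<delta> e / 2"
  have "0 < s" "s < \<delta>" "s < e"
    using \<open>0 < \<delta>\<close> \<open>0 < e\<close> by (auto simp: s_def)
  define E where "E = \<gamma> s - p - s *\<^sub>R d"
  have "p + s *\<^sub>R d + E \<in> Y"
    using in_Y \<open>0 < s\<close> \<open>s < e\<close> by (simp add: E_def)
  then have "s \<le> M * norm E"
    by (rule escape[OF \<open>0 < s\<close>])
  also have "\<dots> \<le> \<bar>M\<bar> * norm E"
    by (simp add: mult_right_mono)
  also have "\<dots> \<le> \<bar>M\<bar> * (\<epsilon> * s)"
    using approx[of s] \<open>0 < s\<close> \<open>s < \<delta>\<close> \<open>\<gamma> 0 = p\<close> by (simp add: E_def mult_left_mono)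
  also have "\<dots> = (\<bar>M\<bar> * \<epsilon>) * s"
    by simp
  also have "\<dots> < 1 * s"
    using \<open>0 < s\<close> by (intro mult_strict_right_mono) (simp_all add: \<epsilon>_def field_simps)
  finally show False
    by simp
qed

lemma le_of_quadratic_pinching:
  fixes C R d e G s :: real
  assumes "0 \<le> C" "0 \<le> R" "0 \<le> d" "0 \<le> e"
    and "d\<^sup>2 \<le> C * G" "G \<le> d * e" "s \<le> R * (e + d)"
  shows "s \<le> R * (1 + C) * e"
proof -
  have "d\<^sup>2 \<le> C * (d * e)"
    using assms(5) mult_left_mono[OF assms(6) assms(1)] by linarith
  then have "d * d \<le> d * (C * e)"
    by (simp add: power2_eq_square mult.left_commute)
  then have "d \<le> C * e"
    using assms(1,3,4) by (cases "d = 0") (simp_all add: mult_le_cancel_left_pos)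
  then have "R * d \<le> R * (C * e)"
    using assms(2) by (rule mult_left_mono)
  then show ?thesis
    using assms(7) by (simp add: algebra_simps)
qed

lemma norm_diff_scaleR_unit_sq:
  fixes u z :: "'a::real_inner"
  assumes "norm u = 1"
  shows "(norm (z - t *\<^sub>R u))\<^sup>2 = (norm z)\<^sup>2 - (u \<bullet> z)\<^sup>2 + (u \<bullet> z - t)\<^sup>2"
proof -
  have "u \<bullet> u = 1"
    using assms by (metis power2_norm_eq_inner one_power2)
  then show ?thesis
    unfolding power2_norm_eq_inner
    by (simp add: inner_diff_left inner_diff_right inner_commute power2_eq_square algebra_simps)
qed

lemma norm_perp_sq_le:
  fixes u z :: "'a::real_inner"
  assumes "norm u = 1" "0 \<le> r" and gap: "r * (norm z - u \<bullet> z) \<le> G" and "norm z \<le> R"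
  shows "r * (norm (z - (u \<bullet> z) *\<^sub>R u))\<^sup>2 \<le> 2 * R * G"
proof -
  have "\<bar>u \<bullet> z\<bar> \<le> norm z"
    using Cauchy_Schwarz_ineq2[of u z] assms(1) by simp
  then have "0 \<le> G"
    using gap \<open>0 \<le> r\<close> by (smt (verit) mult_nonneg_nonneg abs_le_iff)
  have "(norm (z - (u \<bullet> z) *\<^sub>R u))\<^sup>2 = (norm z)\<^sup>2 - (u \<bullet> z)\<^sup>2"
    using norm_diff_scaleR_unit_sq[OF assms(1), of z "u \<bullet> z"] by simp
  then have "r * (norm (z - (u \<bullet> z) *\<^sub>R u))\<^sup>2 = r * ((norm z)\<^sup>2 - (u \<bullet> z)\<^sup>2)"
    by simp
  also have "\<dots> = r * (norm z - u \<bullet> z) * (norm z + u \<bullet> z)"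
    by (simp add: power2_eq_square algebra_simps)
  also have "\<dots> \<le> G * (norm z + u \<bullet> z)"
    using gap \<open>\<bar>u \<bullet> z\<bar> \<le> norm z\<close> by (intro mult_right_mono) auto
  also have "\<dots> \<le> G * (2 * R)"
    using \<open>0 \<le> G\<close> \<open>\<bar>u \<bullet> z\<bar> \<le> norm z\<close> \<open>norm z \<le> R\<close> by (intro mult_left_mono) auto
  finally show ?thesis
    by (simp add: mult.commute)
qed

lemma sum_sq_le_twice_sq_sum:
  fixes x y :: real
  shows "(x + y)\<^sup>2 \<le> 2 * x\<^sup>2 + 2 * y\<^sup>2"
proof -
  have "(x + y)\<^sup>2 + (x - y)\<^sup>2 = 2 * x\<^sup>2 + 2 * y\<^sup>2"
    by (simp add: power2_eq_square algebra_simps)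
  then show ?thesis
    using zero_le_power2[of "x - y"] by linarith
qed

lemma sq_sum_le_of_component_bounds:
  fixes n p G R r :: real
  assumes "0 < r" "0 \<le> G" "G \<le> 2" and orth: "r * n\<^sup>2 \<le> 2 * R * G"
    and par: "\<bar>p\<bar> \<le> R * G + R * R * n"
  shows "n\<^sup>2 + p\<^sup>2 \<le> ((1 + 2 * (R * R)\<^sup>2) * (2 * R / r) + 4 * R\<^sup>2) * G"
proof -
  have "p\<^sup>2 \<le> (R * G + R * R * n)\<^sup>2"
    using power_mono[OF par abs_ge_zero, of 2] by simp
  also have "\<dots> \<le> 2 * (R * G)\<^sup>2 + 2 * ((R * R)\<^sup>2 * n\<^sup>2)"
    using sum_sq_le_twice_sq_sum[of "R * G" "R * R * n"] by (simp add: power_mult_distrib)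
  finally have p_sq: "p\<^sup>2 \<le> 2 * (R * G)\<^sup>2 + 2 * ((R * R)\<^sup>2 * n\<^sup>2)" .
  have "G * G \<le> 2 * G"
    using mult_right_mono[OF assms(3,2)] by simp
  then have "R\<^sup>2 * (G * G) \<le> R\<^sup>2 * (2 * G)"
    by (rule mult_left_mono) simp
  moreover have "(R * G)\<^sup>2 = R\<^sup>2 * (G * G)"
    by (simp add: power_mult_distrib power2_eq_square)
  ultimately have "(R * G)\<^sup>2 \<le> R\<^sup>2 * (2 * G)"
    by simp
  moreover have "n\<^sup>2 \<le> (2 * R / r) * G"
    using orth \<open>0 < r\<close> by (simp add: field_simps)
  then have "(1 + 2 * (R * R)\<^sup>2) * n\<^sup>2 \<le> (1 + 2 * (R * R)\<^sup>2) * ((2 * R / r) * G)"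
    by (rule mult_left_mono) simp
  moreover have "((1 + 2 * (R * R)\<^sup>2) * (2 * R / r) + 4 * R\<^sup>2) * G
      = (1 + 2 * (R * R)\<^sup>2) * ((2 * R / r) * G) + 2 * (R\<^sup>2 * (2 * G))"
    by (simp add: algebra_simps)
  moreover have "(1 + 2 * (R * R)\<^sup>2) * n\<^sup>2 = n\<^sup>2 + 2 * ((R * R)\<^sup>2 * n\<^sup>2)"
    by (simp add: distrib_right)
  ultimately show ?thesis
    using p_sq by linarith
qed

lemma parallel_offset_le:
  assumes a: "omega b0 a = 1" and "0 \<le> 1 - omega b0 z" and "norm a \<le> R" "norm b0 \<le> R"
  shows "\<bar>sgn a \<bullet> z - norm a\<bar> \<le> R * (1 - omega b0 z) + R * R * norm (z - (sgn a \<bullet> z) *\<^sub>R sgn a)"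
proof -
  define G \<zeta> v where "G = 1 - omega b0 z" and "\<zeta> = sgn a \<bullet> z" and "v = z - \<zeta> *\<^sub>R sgn a"
  have "norm a *\<^sub>R sgn a = a"
    by (cases "a = 0") (simp_all add: sgn_div_norm)
  then have "norm a * omega b0 (sgn a) = 1"
    using a by (metis omega_scaleR_right)
  moreover have "norm a * (G + omega b0 v) = norm a - \<zeta> * (norm a * omega b0 (sgn a))"
    by (simp add: G_def v_def algebra_simps)
  ultimately have "\<bar>\<zeta> - norm a\<bar> = \<bar>norm a * (G + omega b0 v)\<bar>"
    by (simp add: abs_minus_commute)
  also have "\<dots> = norm a * \<bar>G + omega b0 v\<bar>"
    by (simp add: abs_mult)
  also have "\<dots> \<le> R * (G + R * norm v)"
  proof (rule mult_mono)
    show "\<bar>G + omega b0 v\<bar> \<le> G + R * norm v"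
      using abs_omega_le[of b0 v] \<open>norm b0 \<le> R\<close> assms(2) mult_right_mono[of "norm b0" R "norm v"]
      by (simp add: G_def)
  qed (use assms(2,3) order_trans[OF norm_ge_zero assms(3)] in \<open>simp_all add: G_def\<close>)
  finally show ?thesis
    by (simp add: G_def \<zeta>_def v_def algebra_simps)
qed

section \<open>Self-polar bodies\<close>

locale self_polar_body =
  fixes X :: "(complex ^ 'n) set"
  assumes convex_body: "convex_body X"
    and zero_in_interior: "0 \<in> interior X"
    and self_polar: "sympolar X = X"
begin

lemma mem_iff_omega_le_1: "w \<in> X \<longleftrightarrow> (\<forall>z\<in>X. omega z w \<le> 1)"
  using self_polar unfolding sympolar_def by blast

lemma omega_le_1: "z \<in> X \<Longrightarrow> w \<in> X \<Longrightarrow> omega z w \<le> 1"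
  using mem_iff_omega_le_1 by blast

lemma omega_ge_minus_1: "z \<in> X \<Longrightarrow> w \<in> X \<Longrightarrow> -1 \<le> omega z w"
  using omega_le_1[of w z] omega_antisym[of z w] by linarith

lemma uminus_mem: "w \<in> X \<Longrightarrow> - w \<in> X"
  using omega_ge_minus_1 mem_iff_omega_le_1[of "- w"] by force

lemma compact: "compact X"
  using convex_body unfolding convex_body_def by simp

lemma frontier_subset: "frontier X \<subseteq> X"
  using compact by (simp add: compact_imp_closed frontier_subset_closed)

lemma frontier_nonzero: "x \<in> frontier X \<Longrightarrow> x \<noteq> 0"
  using zero_in_interior by (auto simp: frontier_def)

text \<open>If the maximum \<open>s\<close> of \<open>omega z x\<close> over \<open>X\<close> were below \<open>1\<close>, then \<open>x / s\<close> would lie in \<open>X\<close>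
  and \<open>x\<close> would be a strict shrinking of it towards the interior point \<open>0\<close>.\<close>

lemma frontier_attains_omega_1:
  assumes x: "x \<in> frontier X"
  shows "\<exists>z\<in>X. omega z x = 1"
proof (rule ccontr)
  assume none: "\<not> (\<exists>z\<in>X. omega z x = 1)"
  have "continuous_on X (\<lambda>z. omega z x)"
    unfolding omega_eq_inner by (intro continuous_intros)
  moreover have "X \<noteq> {}"
    using zero_in_interior interior_subset by blast
  ultimately obtain z0 where "z0 \<in> X" and max: "\<And>z. z \<in> X \<Longrightarrow> omega z x \<le> omega z0 x"
    using continuous_attains_sup[OF compact] by blast
  define s where "s = max (omega z0 x) (1 / 2)"
  have "omega z0 x < 1"
    using omega_le_1[OF \<open>z0 \<in> X\<close>] frontier_subset x none \<open>z0 \<in> X\<close> by fastforce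
  then have "1 / 2 \<le> s" "s < 1"
    by (auto simp: s_def)
  define w where "w = (1 / s) *\<^sub>R x"
  have "w \<in> X"
    unfolding mem_iff_omega_le_1
  proof
    fix z assume "z \<in> X"
    then have "omega z x \<le> s"
      using max by (fastforce simp: s_def)
    then show "omega z w \<le> 1"
      using \<open>1 / 2 \<le> s\<close> by (simp add: w_def field_simps)
  qed
  then have "w - (1 - s) *\<^sub>R (w - 0) \<in> interior X"
    using convex_body \<open>1 / 2 \<le> s\<close> \<open>s < 1\<close>
    by (intro mem_interior_convex_shrink[OF _ zero_in_interior]) (auto simp: convex_body_def)
  moreover have "w - (1 - s) *\<^sub>R (w - 0) = s *\<^sub>R w"
    by (simp add: scaleR_diff_left)
  moreover have "s *\<^sub>R w = x"
    using \<open>1 / 2 \<le> s\<close> by (simp add: w_def)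
  ultimately show False
    using x by (simp add: frontier_def)
qed

lemma frontier_if_omega_eq_1:
  assumes "z \<in> X" "w \<in> X" "w \<noteq> 0" "omega z w = 1"
  shows "z \<in> frontier X"
proof -
  have "z \<notin> interior X"
  proof
    assume "z \<in> interior X"
    then obtain e where "0 < e" and "ball z e \<subseteq> X"
      using mem_interior by blast
    define z' where "z' = z + (e / 2 / norm w) *\<^sub>R (- cJ w)"
    have "dist z z' < e"
      using \<open>0 < e\<close> \<open>w \<noteq> 0\<close> by (simp add: z'_def dist_norm)
    then have "omega z' w \<le> 1"
      using \<open>ball z e \<subseteq> X\<close> omega_le_1 assms(2) by auto
    moreover have "omega z' w = 1 + e / 2 * norm w"
      using assms(3,4) by (simp add: z'_def power2_eq_square)
    moreover have "0 < e * norm w"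
      using \<open>0 < e\<close> \<open>w \<noteq> 0\<close> by simp
    ultimately show False
      by simp
  qed
  then show ?thesis
    using assms(1) closure_subset by (auto simp: frontier_def)
qed

lemma frontier_polar_point_exists:
  assumes "x \<in> frontier X"
  shows "\<exists>y\<in>X. omega x y = 1"
proof -
  obtain z where "z \<in> X" "omega z x = 1"
    using frontier_attains_omega_1[OF assms] by blast
  then show ?thesis
    using uminus_mem omega_antisym[of x z] by force
qed

lemma cball_subset_imp_omega_bound:
  assumes ball: "cball c r \<subseteq> X" and "0 \<le> r" and w: "w \<in> X"
  shows "omega c w + r * norm w \<le> 1"
proof (cases "w = 0")
  case False
  define b where "b = c + (r / norm w) *\<^sub>R (- cJ w)"
  have "dist c b = r"
    using \<open>0 \<le> r\<close> False by (simp add: b_def dist_norm)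
  then have "b \<in> X"
    using ball by auto
  then have "omega b w \<le> 1"
    using omega_le_1 w by blast
  moreover have "omega b w = omega c w + r * norm w"
    using False by (simp add: b_def power2_eq_square)
  ultimately show ?thesis
    by simp
qed simp

text \<open>An inner ball \<open>cball c r\<close> touching the frontier at \<open>b0\<close> squeezes \<open>X\<close> into the polar of the
  ball; as \<open>omega b0 a = 1\<close>, the rotated radius \<open>cJ (b0 - c)\<close> must then point along \<open>a\<close>.\<close>

lemma support_gap_lower_bound:
  assumes ball: "cball c r \<subseteq> X" and "0 \<le> r" "dist b0 c = r"
    and a: "a \<in> X" "omega b0 a = 1" and w: "w \<in> X"
  shows "r * (norm w - sgn a \<bullet> w) \<le> 1 - omega b0 w"
proof -
  define m where "m = cJ (b0 - c)"
  have split: "omega b0 v = omega c v + m \<bullet> v" for v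
    using omega_diff_left[of b0 c v] by (simp add: m_def omega_def)
  have "norm m = r"
    using \<open>dist b0 c = r\<close> by (simp add: m_def dist_norm)
  have bound: "r * norm v \<le> 1 - omega b0 v + m \<bullet> v" if "v \<in> X" for v
    using cball_subset_imp_omega_bound[OF ball \<open>0 \<le> r\<close> that] split[of v] by linarith
  have "a \<noteq> 0"
    using a(2) by auto
  have "r * norm a \<le> m \<bullet> a"
    using bound[OF a(1)] a(2) by simp
  moreover have "m \<bullet> a \<le> r * norm a"
    using norm_cauchy_schwarz[of m a] \<open>norm m = r\<close> by simp
  ultimately have "m \<bullet> a = norm m * norm a"
    using \<open>norm m = r\<close> by simp
  then have "r *\<^sub>R a = norm a *\<^sub>R m"
    using norm_cauchy_schwarz_eq[of m a] \<open>norm m = r\<close> by simp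
  have "m = (1 / norm a) *\<^sub>R (norm a *\<^sub>R m)"
    using \<open>a \<noteq> 0\<close> by simp
  also have "\<dots> = r *\<^sub>R sgn a"
    unfolding \<open>r *\<^sub>R a = norm a *\<^sub>R m\<close>[symmetric] by (simp add: sgn_div_norm divide_inverse mult.commute)
  finally have "m = r *\<^sub>R sgn a" .
  then show ?thesis
    using bound[OF w] by (simp add: algebra_simps)
qed

lemma dist_sq_le_support_gap:
  assumes ball: "cball c r \<subseteq> X" and "0 < r" "dist b0 c = r" and a: "a \<in> X" "omega b0 a = 1"
  obtains C where "0 \<le> C" "\<And>z. z \<in> X \<Longrightarrow> (norm (z - a))\<^sup>2 \<le> C * (1 - omega b0 z)"
proof -
  obtain R where "0 < R" and R: "\<And>x. x \<in> X \<Longrightarrow> norm x \<le> R"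
    using compact_imp_bounded[OF compact] bounded_pos by blast
  have "b0 \<in> X"
    using ball \<open>dist b0 c = r\<close> by (auto simp: dist_commute)
  have "a \<noteq> 0"
    using a(2) by auto
  define u where "u = sgn a"
  have "norm u = 1" "a = norm a *\<^sub>R u"
    using \<open>a \<noteq> 0\<close> by (simp_all add: u_def norm_sgn sgn_div_norm)
  define C where "C = (1 + 2 * (R * R)\<^sup>2) * (2 * R / r) + 4 * R\<^sup>2"
  have "(norm (z - a))\<^sup>2 \<le> C * (1 - omega b0 z)" if z: "z \<in> X" for z
  proof -
    define G where "G = 1 - omega b0 z"
    define \<zeta> where "\<zeta> = u \<bullet> z"
    define v where "v = z - \<zeta> *\<^sub>R u"
    have "0 \<le> G" "G \<le> 2"
      using omega_le_1[OF \<open>b0 \<in> X\<close> z] omega_ge_minus_1[OF \<open>b0 \<in> X\<close> z] by (auto simp: G_def)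
    have "(norm (z - a))\<^sup>2 = (norm v)\<^sup>2 + (\<zeta> - norm a)\<^sup>2"
      using norm_diff_scaleR_unit_sq[OF \<open>norm u = 1\<close>, of z "norm a"]
        norm_diff_scaleR_unit_sq[OF \<open>norm u = 1\<close>, of z \<zeta>] \<open>a = norm a *\<^sub>R u\<close>
      by (simp add: v_def \<zeta>_def)
    have "r * (norm v)\<^sup>2 \<le> 2 * R * G"
      unfolding v_def \<zeta>_def
      using support_gap_lower_bound[OF ball _ \<open>dist b0 c = r\<close> a z] \<open>0 < r\<close> R[OF z]
      by (intro norm_perp_sq_le[OF \<open>norm u = 1\<close>]) (simp_all add: G_def u_def)
    have "\<bar>\<zeta> - norm a\<bar> \<le> R * G + R * R * norm v"
      using parallel_offset_le[OF a(2) \<open>0 \<le> G\<close>[unfolded G_def]] R[OF a(1)] R[OF \<open>b0 \<in> X\<close>]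
      by (simp add: G_def \<zeta>_def v_def u_def)
    then have "(norm v)\<^sup>2 + (\<zeta> - norm a)\<^sup>2 \<le> C * G"
      unfolding C_def
      by (rule sq_sum_le_of_component_bounds[OF \<open>0 < r\<close> \<open>0 \<le> G\<close> \<open>G \<le> 2\<close> \<open>r * (norm v)\<^sup>2 \<le> 2 * R * G\<close>])
    then show ?thesis
      using \<open>(norm (z - a))\<^sup>2 = (norm v)\<^sup>2 + (\<zeta> - norm a)\<^sup>2\<close> by (simp add: G_def)
  qed
  moreover have "0 \<le> C"
    using \<open>0 < r\<close> \<open>0 < R\<close> by (simp add: C_def)
  ultimately show ?thesis
    using that by blast
qed

end

section \<open>The polar map\<close>

locale smooth_self_polar_body = self_polar_body +
  assumes C1_boundary: "C1_boundary X"
begin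

abbreviation f where
  "f \<equiv> sym_f X"

abbreviation Y where
  "Y \<equiv> {x + f x | x. x \<in> frontier X}"

lemma polar_point_unique:
  assumes x: "x \<in> frontier X" and y1: "y1 \<in> X" "omega x y1 = 1" and y2: "y2 \<in> X" "omega x y2 = 1"
  shows "y1 = y2"
proof -
  have "x \<in> X"
    using x frontier_subset by blast
  obtain a where "a \<noteq> 0" and normal: "\<And>n. \<forall>z\<in>X. n \<bullet> (z - x) \<le> 0 \<Longrightarrow> \<exists>k. n = k *\<^sub>R a"
    using C1_boundary_normals_parallel[OF C1_boundary x \<open>x \<in> X\<close>] by blast
  have "\<exists>k. - cJ y = k *\<^sub>R a \<and> k * (x \<bullet> a) = 1" if "y \<in> X" "omega x y = 1" for y
  proof -
    have "\<forall>z\<in>X. (- cJ y) \<bullet> (z - x) \<le> 0"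
    proof
      fix z assume "z \<in> X"
      have "(- cJ y) \<bullet> (z - x) = omega z y - omega x y"
        by (simp only: inner_commute[of "- cJ y"] omega_eq_inner[symmetric] omega_diff_left)
      then show "(- cJ y) \<bullet> (z - x) \<le> 0"
        using omega_le_1[OF \<open>z \<in> X\<close> that(1)] that(2) by simp
    qed
    then obtain k where k: "- cJ y = k *\<^sub>R a"
      using normal by blast
    have "omega x y = x \<bullet> (k *\<^sub>R a)"
      by (simp only: omega_eq_inner k)
    then have "k * (x \<bullet> a) = 1"
      using that(2) by simp
    then show ?thesis
      using k by blast
  qed
  then obtain k1 k2 where k1: "- cJ y1 = k1 *\<^sub>R a" "k1 * (x \<bullet> a) = 1"
    and k2: "- cJ y2 = k2 *\<^sub>R a" "k2 * (x \<bullet> a) = 1"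
    using y1 y2 by meson
  then have "k1 = k2"
    by (metis mult_cancel_right zero_neq_one mult_zero_left)
  then have "cJ y1 = cJ y2"
    using k1(1) k2(1) by (metis neg_equal_iff_equal)
  then show ?thesis
    by (metis cJ_cJ neg_equal_iff_equal)
qed

lemma f_eqI:
  assumes "x \<in> frontier X" "y \<in> X" "omega x y = 1"
  shows "f x = y"
  unfolding sym_f_def self_polar
  using assms polar_point_unique[OF assms(1)] by (intro the_equality) auto

lemma
  assumes "x \<in> frontier X"
  shows f_mem: "f x \<in> X" and omega_f: "omega x (f x) = 1"
proof -
  obtain y where "y \<in> X" "omega x y = 1"
    using frontier_polar_point_exists[OF assms] by blast
  moreover have "f x = y"
    using f_eqI[OF assms] calculation by blast
  ultimately show "f x \<in> X" "omega x (f x) = 1"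
    by simp_all
qed

lemma f_nonzero: "x \<in> frontier X \<Longrightarrow> f x \<noteq> 0"
  using omega_f by force

lemma
  assumes x: "x \<in> frontier X"
  shows uminus_f_frontier: "- f x \<in> frontier X" and f_uminus_f: "f (- f x) = x"
proof -
  have "omega (- f x) x = 1"
    using omega_f[OF x] omega_antisym[of x "f x"] by simp
  moreover have "- f x \<in> X" "x \<in> X"
    using uminus_mem f_mem[OF x] x frontier_subset by auto
  ultimately show fr: "- f x \<in> frontier X"
    using frontier_if_omega_eq_1 frontier_nonzero[OF x] by blast
  show "f (- f x) = x"
    by (rule f_eqI[OF fr \<open>x \<in> X\<close> \<open>omega (- f x) x = 1\<close>])
qed

lemma
  assumes x: "x \<in> frontier X"
  shows uminus_frontier: "- x \<in> frontier X" and f_uminus: "f (- x) = - f x"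
proof -
  have "- x \<in> X" "- f x \<in> X"
    using uminus_mem f_mem[OF x] x frontier_subset by auto
  moreover have "omega (- x) (- f x) = 1"
    using omega_f[OF x] by simp
  ultimately show fr: "- x \<in> frontier X"
    using frontier_if_omega_eq_1 f_nonzero[OF x] by force
  show "f (- x) = - f x"
    by (rule f_eqI[OF fr \<open>- f x \<in> X\<close> \<open>omega (- x) (- f x) = 1\<close>])
qed

lemma frontier_disjoint_Y:
  assumes x: "x \<in> frontier X" and x': "x' \<in> frontier X"
  shows "x \<noteq> x' + f x'"
proof
  assume eq: "x = x' + f x'"
  have "x' \<in> X" "f x' \<in> X"
    using x' frontier_subset f_mem by auto
  have "omega (- x) x' = 1"
    using omega_f[OF x'] omega_antisym[of x x'] by (simp add: eq)
  then have "x' = - f x"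
    using f_eqI[OF uminus_frontier[OF x] \<open>x' \<in> X\<close>] f_uminus[OF x] by simp
  have "omega x (f x') = 1"
    using omega_f[OF x'] omega_antisym[of x' "f x'"] by (simp add: eq)
  then have "f x' = f x"
    using f_eqI[OF x \<open>f x' \<in> X\<close>] by simp
  then have "x = x' + f x"
    using eq by metis
  also have "\<dots> = 0"
    using \<open>x' = - f x\<close> by simp
  finally show False
    using frontier_nonzero[OF x] by blast
qed

lemma line_meets_Y_forward:
  assumes x: "x \<in> frontier X" and x': "x' \<in> frontier X"
    and eq: "x + t *\<^sub>R f x = x' + f x'" and "0 < t"
  shows "t = 1"
proof -
  have "x \<in> X" "f x \<in> X" "x' \<in> X" "f x' \<in> X"
    using x x' frontier_subset f_mem by auto
  have "t * omega (f x') (f x) = -1 - omega (f x') x"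
    using arg_cong[OF eq, of "omega (f x')"] omega_f[OF x'] omega_antisym[of "f x'" x'] by simp
  then have "t * omega (f x') (f x) \<le> 0"
    using omega_ge_minus_1[OF \<open>f x' \<in> X\<close> \<open>x \<in> X\<close>] by linarith
  then have "omega (f x') (f x) \<le> 0"
    using \<open>0 < t\<close> by (simp add: mult_le_0_iff)
  moreover have "omega x' (f x) + omega (f x') (f x) = 1"
    using arg_cong[OF eq, of "\<lambda>w. omega w (f x)"] omega_f[OF x] by simp
  ultimately have "omega (- f x) x' = 1"
    using omega_le_1[OF \<open>x' \<in> X\<close> \<open>f x \<in> X\<close>] omega_antisym[of "f x" x'] by simp
  then have "x' = x"
    using f_eqI[OF uminus_f_frontier[OF x] \<open>x' \<in> X\<close>] f_uminus_f[OF x] by simp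
  then have "t *\<^sub>R f x = 1 *\<^sub>R f x"
    using eq by simp
  then show ?thesis
    using f_nonzero[OF x] scaleR_cancel_right by blast
qed

lemma line_meets_Y_backward:
  assumes x: "x \<in> frontier X" and x': "x' \<in> frontier X"
    and eq: "x + t *\<^sub>R f x = x' + f x'" and "t < 0"
  shows "t = -1"
proof -
  have "x \<in> X" "f x \<in> X" "x' \<in> X" "f x' \<in> X"
    using x x' frontier_subset f_mem by auto
  have "t * omega x' (f x) = 1 - omega x' x"
    using arg_cong[OF eq, of "omega x'"] omega_f[OF x'] by simp
  then have "0 \<le> t * omega x' (f x)"
    using omega_le_1[OF \<open>x' \<in> X\<close> \<open>x \<in> X\<close>] by linarith
  then have "omega x' (f x) \<le> 0"
    using \<open>t < 0\<close> by (simp add: zero_le_mult_iff)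
  moreover have "omega x' (f x) + omega (f x') (f x) = 1"
    using arg_cong[OF eq, of "\<lambda>w. omega w (f x)"] omega_f[OF x] by simp
  ultimately have "omega (- f x) (f x') = 1"
    using omega_le_1[OF \<open>f x' \<in> X\<close> \<open>f x \<in> X\<close>] omega_antisym[of "f x" "f x'"] by simp
  then have "f x' = x"
    using f_eqI[OF uminus_f_frontier[OF x] \<open>f x' \<in> X\<close>] f_uminus_f[OF x] by simp
  then have "x' = t *\<^sub>R f x"
    using eq by (simp add: algebra_simps)
  then have "omega x' (f x') = - t"
    using \<open>f x' = x\<close> omega_f[OF x] omega_antisym[of "f x" x] by simp
  then show ?thesis
    using omega_f[OF x'] by simp
qed

lemma line_inter_Y:
  assumes x: "x \<in> frontier X"
  shows "{x + t *\<^sub>R f x | t. True} \<inter> Y = {x + f x, x - f x}"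
proof (intro equalityI subsetI)
  fix w assume "w \<in> {x + t *\<^sub>R f x | t. True} \<inter> Y"
  then obtain t x' where w: "w = x + t *\<^sub>R f x" and x': "x' \<in> frontier X" and "w = x' + f x'"
    by blast
  then have eq: "x + t *\<^sub>R f x = x' + f x'"
    by simp
  have "t \<noteq> 0"
    using frontier_disjoint_Y[OF x x'] eq by auto
  then have "t = 1 \<or> t = -1"
    using line_meets_Y_forward[OF x x' eq] line_meets_Y_backward[OF x x' eq] by linarith
  then show "w \<in> {x + f x, x - f x}"
    using w by auto
next
  fix w assume "w \<in> {x + f x, x - f x}"
  moreover have "x - f x = - f x + f (- f x)"
    using f_uminus_f[OF x] by simp
  moreover have "x + f x = x + 1 *\<^sub>R f x" "x - f x = x + (-1) *\<^sub>R f x"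
    by simp_all
  ultimately show "w \<in> {x + t *\<^sub>R f x | t. True} \<inter> Y"
    using x uminus_f_frontier[OF x] by blast
qed

lemma line_points_distinct:
  assumes "x \<in> frontier X"
  shows "x + f x \<noteq> x - f x"
proof
  assume "x + f x = x - f x"
  then have "(2::real) *\<^sub>R f x = 0"
    by (simp add: scaleR_2 algebra_simps)
  then show False
    using f_nonzero[OF assms] by simp
qed

lemma pinched_at_polar:
  assumes "C2_boundary X" and x: "x \<in> frontier X"
  obtains C where "0 \<le> C" "\<And>z. z \<in> X \<Longrightarrow> (norm (z - x))\<^sup>2 \<le> C * (1 - omega (- f x) z)"
proof -
  have "- f x \<in> X" "x \<in> X"
    using uminus_mem f_mem[OF x] x frontier_subset by auto
  obtain c r where "0 < r" "cball c r \<subseteq> X" "dist (- f x) c = r"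
    using C2_boundary_interior_ball[OF assms(1) uminus_f_frontier[OF x] \<open>- f x \<in> X\<close>] by blast
  moreover have "omega (- f x) x = 1"
    using omega_f[OF x] omega_antisym[of x "f x"] by simp
  ultimately show ?thesis
    using dist_sq_le_support_gap \<open>x \<in> X\<close> that by blast
qed

lemma escape_bound_forward:
  assumes "C2_boundary X" and x: "x \<in> frontier X"
  obtains M where "\<And>s E. 0 < s \<Longrightarrow> (x + f x) + s *\<^sub>R f x + E \<in> Y \<Longrightarrow> s \<le> M * norm E"
proof -
  obtain C where "0 \<le> C" and pinch: "\<And>z. z \<in> X \<Longrightarrow> (norm (z - x))\<^sup>2 \<le> C * (1 - omega (- f x) z)"
    using pinched_at_polar[OF assms] by blast
  have "s \<le> norm x * (1 + C) * norm E" if "0 < s" and in_Y: "(x + f x) + s *\<^sub>R f x + E \<in> Y" for s E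
  proof -
    obtain x1 where x1: "x1 \<in> frontier X" and eq: "(x + f x) + s *\<^sub>R f x + E = x1 + f x1"
      using in_Y by blast
    define y y1 where "y = f x" and "y1 = f x1"
    have "x \<in> X" "y \<in> X" "x1 \<in> X" "y1 \<in> X"
      using x x1 frontier_subset f_mem by (auto simp: y_def y1_def)
    have "omega x y = 1" "omega x1 y1 = 1"
      using omega_f x x1 by (simp_all add: y_def y1_def)
    have y1_eq: "y1 = x + (1 + s) *\<^sub>R y + E - x1"
      using eq by (simp add: y_def y1_def algebra_simps)
    define G where "G = 1 - omega x1 y"
    have "0 \<le> G" "0 \<le> 1 - omega x y1"
      using omega_le_1 \<open>x \<in> X\<close> \<open>y \<in> X\<close> \<open>x1 \<in> X\<close> \<open>y1 \<in> X\<close> by (auto simp: G_def)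
    have "G + s * G + (1 - omega x y1) = omega (x1 - x) E"
      using \<open>omega x y = 1\<close> \<open>omega x1 y1 = 1\<close> omega_antisym[of x x1]
      by (simp add: G_def y1_eq algebra_simps)
    then have "G \<le> norm (x1 - x) * norm E"
      using omega_le[of "x1 - x" E] \<open>0 \<le> G\<close> \<open>0 \<le> 1 - omega x y1\<close> \<open>0 < s\<close>
        mult_nonneg_nonneg[of s G] by linarith
    moreover have "G = 1 - omega (- f x) x1"
      using omega_antisym[of y x1] by (simp add: G_def y_def)
    moreover have "1 - omega x y1 = - s - omega x E + omega x (x1 - x)"
      using \<open>omega x y = 1\<close> by (simp add: y1_eq algebra_simps)
    then have "s \<le> norm x * (norm E + norm (x1 - x))"
      using \<open>0 \<le> 1 - omega x y1\<close> abs_omega_le[of x E] omega_le[of x "x1 - x"]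
      by (simp add: algebra_simps)
    ultimately show ?thesis
      using le_of_quadratic_pinching[OF \<open>0 \<le> C\<close> norm_ge_zero norm_ge_zero norm_ge_zero
          pinch[OF \<open>x1 \<in> X\<close>]] by simp
  qed
  then show ?thesis
    using that by blast
qed

lemma escape_bound_backward:
  assumes "C2_boundary X" and x: "x \<in> frontier X"
  obtains M where "\<And>s E. 0 < s \<Longrightarrow> (x - f x) + s *\<^sub>R (- f x) + E \<in> Y \<Longrightarrow> s \<le> M * norm E"
proof -
  obtain C where "0 \<le> C" and pinch: "\<And>z. z \<in> X \<Longrightarrow> (norm (z - x))\<^sup>2 \<le> C * (1 - omega (- f x) z)"
    using pinched_at_polar[OF assms] by blast
  have "s \<le> norm x * (1 + C) * norm E" if "0 < s" and in_Y: "(x - f x) + s *\<^sub>R (- f x) + E \<in> Y" for s E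
  proof -
    obtain x1 where x1: "x1 \<in> frontier X" and eq: "(x - f x) + s *\<^sub>R (- f x) + E = x1 + f x1"
      using in_Y by blast
    define y y1 where "y = f x" and "y1 = f x1"
    have "x \<in> X" "- y \<in> X" "x1 \<in> X" "y1 \<in> X"
      using x x1 frontier_subset f_mem uminus_mem by (auto simp: y_def y1_def)
    have "omega x y = 1" "omega x1 y1 = 1"
      using omega_f x x1 by (simp_all add: y_def y1_def)
    have x1_eq: "x1 = x - (1 + s) *\<^sub>R y + E - y1"
      using eq by (simp add: y_def y1_def algebra_simps)
    define G where "G = 1 - omega (- y) y1"
    have "0 \<le> G" "0 \<le> 1 - omega x1 x"
      using omega_le_1[OF \<open>- y \<in> X\<close> \<open>y1 \<in> X\<close>] omega_le_1[OF \<open>x1 \<in> X\<close> \<open>x \<in> X\<close>]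
      by (simp_all add: G_def)
    have "G + s * G + (1 - omega x1 x) = omega E (y1 - x)"
      using \<open>omega x y = 1\<close> \<open>omega x1 y1 = 1\<close> omega_antisym[of y x] omega_antisym[of y1 y]
        omega_antisym[of y1 x]
      by (simp add: G_def x1_eq algebra_simps)
    then have "G \<le> norm E * norm (y1 - x)"
      using omega_le[of E "y1 - x"] \<open>0 \<le> G\<close> \<open>0 \<le> 1 - omega x1 x\<close> \<open>0 < s\<close>
        mult_nonneg_nonneg[of s G] by linarith
    then have "G \<le> norm (y1 - x) * norm E"
      by (simp add: mult.commute)
    moreover have "G = 1 - omega (- f x) (f x1)"
      by (simp add: G_def y_def y1_def)
    moreover have "1 - omega x1 x = - s - omega E x + omega (y1 - x) x"
      using \<open>omega x y = 1\<close> omega_antisym[of y x] by (simp add: x1_eq algebra_simps)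
    then have "s \<le> norm x * (norm E + norm (y1 - x))"
      using \<open>0 \<le> 1 - omega x1 x\<close> abs_omega_le[of E x] omega_le[of "y1 - x" x]
      by (simp add: algebra_simps)
    ultimately show ?thesis
      using le_of_quadratic_pinching[OF \<open>0 \<le> C\<close> norm_ge_zero norm_ge_zero norm_ge_zero
          pinch[OF \<open>y1 \<in> X\<close>]] by (simp add: y1_def)
  qed
  then show ?thesis
    using that by blast
qed

lemma transversal_at_both_points:
  assumes "C2_boundary X" and x: "x \<in> frontier X"
  shows "transversal_line_at Y (x + f x) (f x) \<and> transversal_line_at Y (x - f x) (f x)"
proof -
  have "x + f x \<in> Y"
    using x by blast
  moreover have "x - f x \<in> Y"
    using uminus_f_frontier[OF x] f_uminus_f[OF x] by force
  moreover obtain M where "\<And>s E. 0 < s \<Longrightarrow> (x + f x) + s *\<^sub>R f x + E \<in> Y \<Longrightarrow> s \<le> M * norm E"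
    using escape_bound_forward[OF assms] by blast
  then have "f x \<notin> tangent_space Y (x + f x)"
    by (rule not_in_tangent_space_if_escapes)
  moreover obtain M' where "\<And>s E. 0 < s \<Longrightarrow> (x - f x) + s *\<^sub>R (- f x) + E \<in> Y \<Longrightarrow> s \<le> M' * norm E"
    using escape_bound_backward[OF assms] by blast
  then have "- f x \<notin> tangent_space Y (x - f x)"
    by (rule not_in_tangent_space_if_escapes)
  then have "f x \<notin> tangent_space Y (x - f x)"
    using tangent_space_uminus by blast
  ultimately show ?thesis
    unfolding transversal_line_at_def by blast
qed

end

theorem lemma4p3:
  fixes X :: "(complex ^ 'n) set"
  assumes "convex_body X"
    and "0 \<in> interior X"
    and "sympolar X = X"
    and "C1_boundary X"
  defines "Y \<equiv> {x + sym_f X x | x. x \<in> frontier X}"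
  shows "(\<forall>x\<in>frontier X.
           {x + t *\<^sub>R sym_f X x | t. True} \<inter> Y = {x + sym_f X x, x - sym_f X x}
           \<and> x + sym_f X x \<noteq> x - sym_f X x)
         \<and> (C2_boundary X \<longrightarrow> (\<forall>x\<in>frontier X.
           transversal_line_at Y (x + sym_f X x) (sym_f X x) \<and>
           transversal_line_at Y (x - sym_f X x) (sym_f X x)))"
proof -
  interpret smooth_self_polar_body X
    using assms(1-4) by unfold_locales
  show ?thesis
    unfolding Y_def
    by (intro conjI ballI impI line_inter_Y line_points_distinct transversal_at_both_points)
qed

end
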